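(* Let $n\ge3$ and $\pi\in\mathrm{Eq}(\mathsf{B}_n)$. If the variety $\mathbf{A}_n\{\mathsf{Id}(\pi)\}$ satisfies an identity $\mathbf{u}\approx\mathbf{v}$ with $\mathbf{u}\in\mathsf{B}_n$, then $\mathbf{v}\in\mathsf{B}_n$ and $(\mathbf{u},\mathbf{v})\in\pi$.
   Context: All varieties are varieties of monoids (signature: associative binary operation and identity constant $1$). Words are elements of the free monoid $X^*$ over a countably infinite set $X$ of variables; identities are pairs of words, and variables may be substituted by $1$. For a variety $\mathbf{V}$ and set $\Sigma$ of identities, $\mathbf{V}\Sigma$ is the subvariety of $\mathbf{V}$ defined by $\Sigma$. $\mathbf{O}$ is the variety defined by $xyt_1xt_2y \approx yxt_1xt_2y$, $xt_1xyt_2y \approx xt_1yxt_2y$, $xt_1yt_2xy \approx xt_1yt_2yx$. For $n\ge3$, $\mathtt{A}_n$ is $x^n t_1\cdots t_n \approx t_1x\,t_2x\cdots t_nx$, $\mathbf{A}_n=\mathbf{O}\{\mathtt{A}_n\}$, and $\mathsf{B}_n=\{x^{n-1-j}tx^{j}:0\le j\le n-1\}$ (with $x,t$ distinct variables). For a set $\mathsf{W}$ of words, $\mathrm{Eq}(\mathsf{W})$ is the lattice of equivalence relations on $\mathsf{W}$ and $\mathsf{Id}(\pi)=\{\mathbf{u}\approx\mathbf{v}:(\mathbf{u},\mathbf{v})\in\pi\}$. *)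

theory Defs
  imports Main
begin

text \<open>Variables are natural numbers; words are elements of the free monoid nat list
  (concatenation, identity = empty word). An identity is a pair of words.\<close>

type_synonym word = "nat list"
type_synonym identity = "word \<times> word"

text \<open>Substitution of words (possibly the empty word, i.e. 1) for variables.\<close>
definition subst :: "(nat \<Rightarrow> word) \<Rightarrow> word \<Rightarrow> word" where
  "subst \<sigma> w = concat (map \<sigma> w)"

text \<open>Equational logic for monoids: the identities holding in the variety defined by
  Sigma (by Birkhoff's completeness theorem, these are exactly the derivable ones).\<close>
inductive derivable :: "identity set \<Rightarrow> word \<Rightarrow> word \<Rightarrow> bool" for \<Sigma> where
  axiom: "(u, v) \<in> \<Sigma> \<Longrightarrow> derivable \<Sigma> (subst \<sigma> u) (subst \<sigma> v)"
| rfl: "derivable \<Sigma> u u"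
| symm: "derivable \<Sigma> u v \<Longrightarrow> derivable \<Sigma> v u"
| trns: "derivable \<Sigma> u v \<Longrightarrow> derivable \<Sigma> v w \<Longrightarrow> derivable \<Sigma> u w"
| ctxt: "derivable \<Sigma> u v \<Longrightarrow> derivable \<Sigma> (p @ u @ q) (p @ v @ q)"

definition satisfies :: "identity set \<Rightarrow> identity \<Rightarrow> bool" where
  "satisfies \<Sigma> e \<longleftrightarrow> derivable \<Sigma> (fst e) (snd e)"

text \<open>Variable names: x = 0, y = 1, t1 = 2, t2 = 3.\<close>
definition O_ids :: "identity set" where
  "O_ids = { ([0,1,2,0,3,1], [1,0,2,0,3,1]),
             ([0,2,0,1,3,1], [0,2,1,0,3,1]),
             ([0,2,1,3,0,1], [0,2,1,3,1,0]) }"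

text \<open>A_n : x^n t_1 ... t_n = t_1 x t_2 x ... t_n x, with x = 0 and t_i = i.\<close>
definition A_id :: "nat \<Rightarrow> identity" where
  "A_id n = (replicate n 0 @ [1..<n+1], concat (map (\<lambda>i. [i, 0]) [1..<n+1]))"

text \<open>B_n = { x^(n-1-j) t x^j : 0 <= j <= n-1 }, with x = 0 and t = 1.\<close>
definition B :: "nat \<Rightarrow> word set" where
  "B n = { replicate (n - 1 - j) 0 @ [1] @ replicate j 0 | j. j \<le> n - 1 }"

text \<open>Defining identities of A_n{Id(pi)}: those of O, A_n, and Id(pi) = pi.\<close>
definition A_pi_ids :: "nat \<Rightarrow> identity set \<Rightarrow> identity set" where
  "A_pi_ids n \<pi> = O_ids \<union> {A_id n} \<union> \<pi>"

end

theory Submission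
  imports Defs
begin

(* A derivation is a chain of elementary steps p \<sigma>(l) q \<leftrightarrow> p \<sigma>(r) q, so it suffices that every
   step leaving a word of B_n stays in its \<pi>-class. A factor of a word of B_n contains 1 at most
   once, no other nonzero letter, and at most n - 1 zeros. Hence a variable occurring twice in l
   is sent to a power of 0: for the identities of O the images of x and y then commute, and for
   A_n the n occurrences of x force \<sigma>(x) to be empty; either way \<sigma>(l) = \<sigma>(r). For a pair
   (l, r) of \<pi> both words lie in B_n, and counting lengths shows that unless \<sigma>(l) = \<sigma>(r) the
   substitution fixes 0 and 1 and the context is empty, so the step is (l, r) itself. *)

lemma subst_Nil [simp]: "subst \<sigma> [] = []"
  by (simp add: subst_def)

lemma subst_Cons [simp]: "subst \<sigma> (x # w) = \<sigma> x @ subst \<sigma> w"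
  by (simp add: subst_def)

lemma subst_append [simp]: "subst \<sigma> (u @ w) = subst \<sigma> u @ subst \<sigma> w"
  by (simp add: subst_def)

lemma subst_replicate [simp]: "subst \<sigma> (replicate k x) = concat (replicate k (\<sigma> x))"
  by (induction k) auto

lemma set_subst: "set (subst \<sigma> w) = (\<Union>x\<in>set w. set (\<sigma> x))"
  by (simp add: subst_def)

lemma count_list_subst_ge: "count_list w x * count_list (\<sigma> x) c \<le> count_list (subst \<sigma> w) c"
  by (induction w) auto

lemma subst_removeAll: "\<sigma> x = [] \<Longrightarrow> subst \<sigma> (removeAll x w) = subst \<sigma> w"
  by (induction w) auto

lemma subst_eq_self: "(\<And>x. x \<in> set w \<Longrightarrow> \<sigma> x = [x]) \<Longrightarrow> subst \<sigma> w = w"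
  by (induction w) auto

lemma append_commute_if_single_letter:
  assumes "set u \<subseteq> {c}" "set v \<subseteq> {c}"
  shows "u @ v = v @ u"
proof -
  have "u = replicate (length u) c" "v = replicate (length v) c"
    using assms by (metis replicate_length_same singletonD subsetD)+
  then show ?thesis
    by (metis add.commute replicate_add)
qed

lemma derivable_stays_in_class:
  assumes W: "equiv W \<pi>"
    and step: "\<And>l r \<sigma> p q. (l, r) \<in> \<Sigma> \<or> (r, l) \<in> \<Sigma> \<Longrightarrow> p @ subst \<sigma> l @ q \<in> W
      \<Longrightarrow> (p @ subst \<sigma> l @ q, p @ subst \<sigma> r @ q) \<in> \<pi>"
    and "derivable \<Sigma> u v" "u \<in> W"
  shows "(u, v) \<in> \<pi>"
proof -
  have \<pi>_W: "x \<in> W \<and> y \<in> W" if "(x, y) \<in> \<pi>" for x y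
    using W that by (auto simp: equiv_def refl_on_def)
  have \<pi>_sym: "(y, x) \<in> \<pi>" if "(x, y) \<in> \<pi>" for x y
    using W that by (auto simp: equiv_def elim: symE)
  have \<pi>_trans: "(x, z) \<in> \<pi>" if "(x, y) \<in> \<pi>" "(y, z) \<in> \<pi>" for x y z
    using W that by (auto simp: equiv_def elim: transE)
  \<comment> \<open>Generalized over the context for the rule ctxt, and symmetric in u, v for symm.\<close>
  have "p @ u @ q \<in> W \<or> p @ v @ q \<in> W \<Longrightarrow> (p @ u @ q, p @ v @ q) \<in> \<pi>" for p q
    using \<open>derivable \<Sigma> u v\<close>
  proof (induction arbitrary: p q)
    case (axiom l r \<sigma>)
    then show ?case
      using step \<pi>_sym by blast
  next
    case (rfl u)
    then show ?case
      using W by (auto simp: equiv_def refl_on_def)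
  next
    case (symm u v)
    then show ?case
      using \<pi>_sym by blast
  next
    case (trns u v w)
    then show ?case
      using \<pi>_W \<pi>_trans by meson
  next
    case (ctxt u v p' q')
    then show ?case
      using ctxt.IH[of "p @ p'" "q' @ q"] by simp
  qed
  from this[of "[]" "[]"] show ?thesis
    using \<open>u \<in> W\<close> by simp
qed

lemma count_list_replicate [simp]: "count_list (replicate k x) y = (if x = y then k else 0)"
  by (induction k) auto

lemma removeAll_replicate [simp]: "removeAll x (replicate k x) = []"
  by (induction k) auto

lemma count_list_B:
  "w \<in> B n \<Longrightarrow> count_list w c = (if c = 0 then n - 1 else if c = 1 then 1 else 0)"
  by (auto simp: B_def)

lemma set_B: "w \<in> B n \<Longrightarrow> set w \<subseteq> {0, 1}"
  by (auto simp: B_def)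

lemma length_B: "w \<in> B n \<Longrightarrow> 1 \<le> n \<Longrightarrow> length w = n"
  by (auto simp: B_def)

lemma removeAll_B:
  assumes "w \<in> B n"
  shows "removeAll 0 w = [1]" and "removeAll 1 w = replicate (n - 1) 0"
  using assms by (auto simp: B_def replicate_add[symmetric])

lemma length_subst_B:
  assumes "w \<in> B n"
  shows "length (subst \<sigma> w) = (n - 1) * length (\<sigma> 0) + length (\<sigma> 1)"
proof -
  obtain j where "j \<le> n - 1" "w = replicate (n - 1 - j) 0 @ [1] @ replicate j 0"
    using assms by (auto simp: B_def)
  then have "(n - 1 - j) * a + j * a = (n - 1) * a" for a :: nat
    by (metis add_mult_distrib le_add_diff_inverse2)
  with \<open>w = _\<close> show ?thesis
    by (simp add: length_concat sum_list_replicate)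
qed

lemma repeated_var_maps_into_zeros:
  assumes "p @ subst \<sigma> w @ q \<in> B n" "2 \<le> count_list w x"
  shows "set (\<sigma> x) \<subseteq> {0}"
proof
  fix c
  assume "c \<in> set (\<sigma> x)"
  show "c \<in> {0}"
  proof (rule ccontr)
    assume "c \<notin> {0}"
    have "2 * 1 \<le> count_list w x * count_list (\<sigma> x) c"
      using assms(2) \<open>c \<in> set (\<sigma> x)\<close> count_list_0_iff[of "\<sigma> x" c]
      by (intro mult_le_mono) auto
    also have "\<dots> \<le> count_list (subst \<sigma> w) c"
      by (rule count_list_subst_ge)
    also have "\<dots> \<le> count_list (p @ subst \<sigma> w @ q) c"
      by simp
    also have "\<dots> \<le> 1"
      using count_list_B[OF assms(1)] \<open>c \<notin> {0}\<close> by simp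
    finally show False
      by simp
  qed
qed

lemma frequent_var_maps_to_Nil:
  assumes "p @ subst \<sigma> w @ q \<in> B n" "2 \<le> n" "n \<le> count_list w x"
  shows "\<sigma> x = []"
proof -
  have "n * count_list (\<sigma> x) 0 \<le> count_list w x * count_list (\<sigma> x) 0"
    using assms(3) by simp
  also have "\<dots> \<le> count_list (p @ subst \<sigma> w @ q) 0"
    using count_list_subst_ge[of w x \<sigma> 0] by simp
  also have "\<dots> = n - 1"
    using count_list_B[OF assms(1)] by simp
  finally have "count_list (\<sigma> x) 0 = 0"
    using assms(2) by (cases "count_list (\<sigma> x) 0") auto
  then have "0 \<notin> set (\<sigma> x)"
    by (simp add: count_list_0_iff)
  moreover have "set (\<sigma> x) \<subseteq> {0}"
    using repeated_var_maps_into_zeros[OF assms(1) le_trans[OF assms(2,3)]] .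
  ultimately show ?thesis
    by (auto simp: subset_singleton_iff)
qed

lemma O_ids_step_trivial:
  assumes "(l, r) \<in> O_ids \<or> (r, l) \<in> O_ids" "p @ subst \<sigma> l @ q \<in> B n"
  shows "subst \<sigma> l = subst \<sigma> r"
proof -
  have "count_list l 0 = 2" "count_list l 1 = 2"
    using assms(1) by (auto simp: O_ids_def)
  then have "set (\<sigma> 0) \<subseteq> {0}" "set (\<sigma> 1) \<subseteq> {0}"
    using repeated_var_maps_into_zeros[OF assms(2)] by simp_all
  then have comm: "\<sigma> 0 @ \<sigma> 1 = \<sigma> 1 @ \<sigma> 0"
    by (rule append_commute_if_single_letter)
  then have "\<sigma> 0 @ \<sigma> 1 @ w = \<sigma> 1 @ \<sigma> 0 @ w" for w
    by (metis append_assoc)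
  with comm show ?thesis
    using assms(1) by (auto simp: O_ids_def)
qed

lemma A_id_step_trivial:
  assumes "2 \<le> n" "(l, r) = A_id n \<or> (r, l) = A_id n" "p @ subst \<sigma> l @ q \<in> B n"
  shows "subst \<sigma> l = subst \<sigma> r"
proof -
  define ts :: word where "ts = [1..<n + 1]"
  have ts: "0 \<notin> set ts" "length ts = n"
    by (simp_all add: ts_def)
  have A: "A_id n = (replicate n 0 @ ts, concat (map (\<lambda>i. [i, 0]) ts))"
    by (simp add: A_id_def ts_def)
  have "count_list (concat (map (\<lambda>i. [i, 0]) ts)) 0 = length ts"
    "removeAll 0 (concat (map (\<lambda>i. [i, 0]) ts)) = ts"
    using ts(1) by (induction ts) auto
  then have "count_list l 0 = n" "removeAll 0 l = removeAll 0 r"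
    using assms(2) ts by (auto simp: A)
  moreover from this have "\<sigma> 0 = []"
    using frequent_var_maps_to_Nil[OF assms(3,1)] by simp
  ultimately show ?thesis
    by (metis subst_removeAll)
qed

lemma B_pair_step_trivial_or_identity:
  assumes "3 \<le> n" "l \<in> B n" "r \<in> B n" "p @ subst \<sigma> l @ q \<in> B n"
  shows "subst \<sigma> l = subst \<sigma> r \<or> (p @ subst \<sigma> l @ q, p @ subst \<sigma> r @ q) = (l, r)"
proof -
  consider "\<sigma> 0 = []" | "\<sigma> 1 = []" | "\<sigma> 0 \<noteq> []" "\<sigma> 1 \<noteq> []"
    by blast
  then show ?thesis
  proof cases
    case 1
    then show ?thesis
      using removeAll_B(1)[OF assms(2)] removeAll_B(1)[OF assms(3)] by (metis subst_removeAll)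
  next
    case 2
    then show ?thesis
      using removeAll_B(2)[OF assms(2)] removeAll_B(2)[OF assms(3)] by (metis subst_removeAll)
  next
    case 3
    have len: "length p + (n - 1) * length (\<sigma> 0) + length (\<sigma> 1) + length q = n"
      using length_B[OF assms(4)] length_subst_B[OF assms(2)] assms(1) by simp
    moreover have "n - 1 \<le> (n - 1) * length (\<sigma> 0)" "1 \<le> length (\<sigma> 1)"
      using 3 by (simp_all add: Suc_le_eq)
    ultimately have "(n - 1) * length (\<sigma> 0) = n - 1" "length (\<sigma> 1) = 1"
      "length p = 0" "length q = 0"
      by linarith+
    with assms(1) have "length (\<sigma> 0) = 1" "length (\<sigma> 1) = 1" "p = []" "q = []"
      by simp_all
    moreover have "set (\<sigma> 0) \<subseteq> {0}"
      using repeated_var_maps_into_zeros[OF assms(4)] count_list_B[OF assms(2), of 0] assms(1) by simp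
    ultimately obtain d where \<sigma>01: "\<sigma> 0 = [0]" "\<sigma> 1 = [d]"
      by (auto simp: length_Suc_conv)
    have "count_list (p @ subst \<sigma> l @ q) 1 = 1"
      using count_list_B[OF assms(4), of 1] by simp
    then have "1 \<in> set (p @ subst \<sigma> l @ q)"
      by (metis count_notin zero_neq_one)
    then have "d = 1"
      using \<open>p = []\<close> \<open>q = []\<close> set_B[OF assms(2)] \<sigma>01 by (auto simp: set_subst)
    then have "subst \<sigma> w = w" if "w \<in> B n" for w
      using \<sigma>01 set_B[OF that] by (intro subst_eq_self) auto
    then show ?thesis
      using assms(2,3) \<open>p = []\<close> \<open>q = []\<close> by simp
  qed
qed

lemma A_pi_step_stays_in_class:
  assumes "3 \<le> n" "equiv (B n) \<pi>" "(l, r) \<in> A_pi_ids n \<pi> \<or> (r, l) \<in> A_pi_ids n \<pi>"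
    and "p @ subst \<sigma> l @ q \<in> B n"
  shows "(p @ subst \<sigma> l @ q, p @ subst \<sigma> r @ q) \<in> \<pi>"
proof (cases "subst \<sigma> l = subst \<sigma> r")
  case True
  then show ?thesis
    using assms(2,4) by (simp add: equiv_def refl_on_def)
next
  case False
  then have "(l, r) \<in> \<pi> \<or> (r, l) \<in> \<pi>"
    using assms(1,3) O_ids_step_trivial[OF _ assms(4)] A_id_step_trivial[OF _ _ assms(4)]
    by (auto simp: A_pi_ids_def)
  then have "(l, r) \<in> \<pi>" "l \<in> B n" "r \<in> B n"
    using assms(2) by (auto simp: equiv_def refl_on_def elim: symE)
  then show ?thesis
    using B_pair_step_trivial_or_identity[OF assms(1) \<open>l \<in> B n\<close> \<open>r \<in> B n\<close> assms(4)] False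
    by auto
qed

theorem lemma3p3:
  fixes n :: nat and \<pi> :: "(word \<times> word) set" and u v :: word
  assumes "n \<ge> 3"
    and "equiv (B n) \<pi>"
    and "satisfies (A_pi_ids n \<pi>) (u, v)"
    and "u \<in> B n"
  shows "v \<in> B n \<and> (u, v) \<in> \<pi>"
proof -
  have "(u, v) \<in> \<pi>"
    using derivable_stays_in_class[OF assms(2) A_pi_step_stays_in_class[OF assms(1,2)]] assms(3,4)
    by (simp add: satisfies_def)
  then show ?thesis
    using assms(2) by (auto simp: equiv_def refl_on_def)
qed

end
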